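(* Consider the infinite-horizon dynamic multi-agent system described in the context and suppose Assumption B holds. Let $\mathbf x(0)\in\mathcal X_0$ and let $(\boldsymbol\lambda^\ast,\mathbf U^\ast,\mathbf E^\ast)$ be an infinite-horizon competitive equilibrium for $\mathbf x(0)$. Then there exists a time $\bar N(\mathbf x(0))$ such that $\lambda^\ast_t=0$ for all $t>\bar N(\mathbf x(0))$.
   Context: Infinite-horizon dynamic multi-agent system: $n$ agents $\mathcal V=\{1,\dots,n\}$, time set $\mathcal T=\{0,1,2,\dots\}$. Agent $i$ has state $\mathbf x_i(t)\in\mathbb R^d$, input $\mathbf u_i(t)\in\mathbb R^m$, dynamics $\mathbf x_i(t+1)=\mathbf A_i\mathbf x_i(t)+\mathbf B_i\mathbf u_i(t)$, utility $f_i:\mathbb R^d\times\mathbb R^m\to\mathbb R$, resource consumption $h_i:\mathbb R^m\to\mathbb R$, excess resource $a_i(t)\in\mathbb R$, traded resource $e_i(t)\in\mathbb R$; $C(t)=\sum_ia_i(t)$; $\mathbf x(t)=(\mathbf x_1(t),\dots,\mathbf x_n(t))\in\mathbb R^{nd}$ with given $\mathbf x(0)$; $\mathbf U_i,\mathbf E_i$ denote the sequences $(\mathbf u_i(t))_{t\ge0}$, $(e_i(t))_{t\ge0}$, and $\mathbf U,\mathbf E$ their collections over all agents. Assumption B: (i) each $f_i$ is concave and negative definite, i.e. $f_i(\mathbf 0,\mathbf 0)=0$ and $f_i(\mathbf x,\mathbf u)<0$ for $(\mathbf x,\mathbf u)\ne(\mathbf 0,\mathbf 0)$; (ii) each $h_i$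 is non-negative and convex; (iii) $h_i(\mathbf 0)=0$; (iv) there is $C>0$ with $C(t)\ge C$ for all $t\ge0$. (Under (i) all series $\sum_t f_i$ converge in $[-\infty,0]$.) An infinite-horizon competitive equilibrium for $\mathbf x(0)$ is a triple $(\boldsymbol\lambda^\ast,\mathbf U^\ast,\mathbf E^\ast)$, $\boldsymbol\lambda^\ast=(\lambda^\ast_t)_{t\ge0}$, such that (i) for each $i$, $(\mathbf U_i^\ast,\mathbf E_i^\ast)$ attains a finite maximum of $\sum_{t=0}^\infty[f_i(\mathbf x_i(t),\mathbf u_i(t))+\lambda^\ast_te_i(t)]$ subject to the dynamics and $e_i(t)\le a_i(t)-h_i(\mathbf u_i(t))$ for all $t$; (ii) $\sum_{i=1}^ne_i^\ast(t)=0$ for all $t$. The infinite-horizon social welfare maximization problem for $\mathbf x(0)$: maximize $\sum_{i=1}^n\sum_{t=0}^\infty f_i(\mathbf x_i(t),\mathbf u_i(t))$ over $(\mathbf U,\mathbf E)$ subject to the dynamics, $e_i(t)\le a_i(t)-h_i(\mathbf u_i(t))$ and $\sum_{i=1}^ne_i(t)=0$ for all $t\ge0$. The set of feasible initial conditions $\mathcal X_0$ consists of those $\mathbf x(0)$ for which this problem has an admissible $(\mathbf U,\mathbf E)$ and finite optimal value. *)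

theory Defs
  imports "HOL-Analysis.Analysis"
begin

primrec traj :: "real^'d^'d \<Rightarrow> real^'m^'d \<Rightarrow> real^'d \<Rightarrow> (nat \<Rightarrow> real^'m) \<Rightarrow> nat \<Rightarrow> real^'d" where
  "traj A B x0 u 0 = x0"
| "traj A B x0 u (Suc t) = A *v traj A B x0 u t + B *v u t"

definition agent_feasible :: "(real^'m \<Rightarrow> real) \<Rightarrow> (nat \<Rightarrow> real) \<Rightarrow> (nat \<Rightarrow> real^'m) \<Rightarrow> (nat \<Rightarrow> real) \<Rightarrow> bool" where
  "agent_feasible h a u e \<longleftrightarrow> (\<forall>t. e t \<le> a t - h (u t))"

definition agent_obj :: "(real^'d \<Rightarrow> real^'m \<Rightarrow> real) \<Rightarrow> real^'d^'d \<Rightarrow> real^'m^'d \<Rightarrow> real^'d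
    \<Rightarrow> (nat \<Rightarrow> real) \<Rightarrow> (nat \<Rightarrow> real^'m) \<Rightarrow> (nat \<Rightarrow> real) \<Rightarrow> nat \<Rightarrow> real" where
  "agent_obj f A B x0 lam u e t = f (traj A B x0 u t) (u t) + lam t * e t"

definition agent_optimal :: "(real^'d \<Rightarrow> real^'m \<Rightarrow> real) \<Rightarrow> (real^'m \<Rightarrow> real) \<Rightarrow> real^'d^'d \<Rightarrow> real^'m^'d
    \<Rightarrow> (nat \<Rightarrow> real) \<Rightarrow> real^'d \<Rightarrow> (nat \<Rightarrow> real) \<Rightarrow> (nat \<Rightarrow> real^'m) \<Rightarrow> (nat \<Rightarrow> real) \<Rightarrow> bool" where
  "agent_optimal f h A B a x0 lam u e \<longleftrightarrow>
     agent_feasible h a u e \<and> summable (agent_obj f A B x0 lam u e) \<and>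
     (\<forall>u' e'. agent_feasible h a u' e' \<and> summable (agent_obj f A B x0 lam u' e') \<longrightarrow>
        suminf (agent_obj f A B x0 lam u' e') \<le> suminf (agent_obj f A B x0 lam u e))"

definition competitive_equilibrium ::
  "('i::finite \<Rightarrow> real^'d \<Rightarrow> real^'m \<Rightarrow> real) \<Rightarrow> ('i \<Rightarrow> real^'m \<Rightarrow> real) \<Rightarrow> ('i \<Rightarrow> real^'d^'d) \<Rightarrow> ('i \<Rightarrow> real^'m^'d)
   \<Rightarrow> ('i \<Rightarrow> nat \<Rightarrow> real) \<Rightarrow> ('i \<Rightarrow> real^'d) \<Rightarrow> (nat \<Rightarrow> real) \<Rightarrow> ('i \<Rightarrow> nat \<Rightarrow> real^'m) \<Rightarrow> ('i \<Rightarrow> nat \<Rightarrow> real) \<Rightarrow> bool" where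
  "competitive_equilibrium f h A B a x0 lam U E \<longleftrightarrow>
     (\<forall>i. agent_optimal (f i) (h i) (A i) (B i) (a i) (x0 i) lam (U i) (E i)) \<and>
     (\<forall>t. (\<Sum>i\<in>UNIV. E i t) = 0)"

definition welfare_admissible :: "('i::finite \<Rightarrow> real^'m \<Rightarrow> real) \<Rightarrow> ('i \<Rightarrow> nat \<Rightarrow> real)
    \<Rightarrow> ('i \<Rightarrow> nat \<Rightarrow> real^'m) \<Rightarrow> ('i \<Rightarrow> nat \<Rightarrow> real) \<Rightarrow> bool" where
  "welfare_admissible h a U E \<longleftrightarrow>
     (\<forall>i. agent_feasible (h i) (a i) (U i) (E i)) \<and> (\<forall>t. (\<Sum>i\<in>UNIV. E i t) = 0)"

text \<open>Social welfare \<Sum>_i \<Sum>_t f_i, in the extended reals (the series of the nonpositive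
  terms f_i converge in [-\<infinity>,0]; written as minus a series of nonnegative terms).\<close>
definition welfare :: "('i::finite \<Rightarrow> real^'d \<Rightarrow> real^'m \<Rightarrow> real) \<Rightarrow> ('i \<Rightarrow> real^'d^'d) \<Rightarrow> ('i \<Rightarrow> real^'m^'d)
    \<Rightarrow> ('i \<Rightarrow> real^'d) \<Rightarrow> ('i \<Rightarrow> nat \<Rightarrow> real^'m) \<Rightarrow> ereal" where
  "welfare f A B x0 U =
     (\<Sum>i\<in>UNIV. - (\<Sum>t. ereal (- f i (traj (A i) (B i) (x0 i) (U i) t) (U i t))))"

definition feasible_init ::
  "('i::finite \<Rightarrow> real^'d \<Rightarrow> real^'m \<Rightarrow> real) \<Rightarrow> ('i \<Rightarrow> real^'m \<Rightarrow> real) \<Rightarrow> ('i \<Rightarrow> real^'d^'d) \<Rightarrow> ('i \<Rightarrow> real^'m^'d)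
   \<Rightarrow> ('i \<Rightarrow> nat \<Rightarrow> real) \<Rightarrow> ('i \<Rightarrow> real^'d) \<Rightarrow> bool" where
  "feasible_init f h A B a x0 \<longleftrightarrow>
     (\<exists>U E. welfare_admissible h a U E) \<and>
     \<bar>SUP UE\<in>{(U, E). welfare_admissible h a U E}. welfare f A B x0 (fst UE)\<bar> \<noteq> \<infinity>"

end

theory Submission
  imports Defs
begin

text \<open>At a positive price an agent always spends its whole excess resource, so the market
  clearing condition forces \<Sum>i h_i(u_i(t)) = \<Sum>i a_i(t) \<ge> C. On the other hand, clearing
  makes the price terms cancel in the sum of the agents' (finite) objectives, so the total
  utility \<Sum>i f_i is summable; its terms are nonpositive, hence each f_i along the
  equilibrium tends to 0, and negative definiteness plus concavity force u_i(t) \<rightarrow> 0 and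
  h_i(u_i(t)) \<rightarrow> 0. Thus the resource constraint eventually cannot bind, and prices vanish.\<close>

lemma concave_on_continuous:
  fixes g :: "'a::euclidean_space \<Rightarrow> real"
  assumes "concave_on UNIV g"
  shows "continuous_on UNIV g"
proof -
  have "continuous_on UNIV (\<lambda>x. - g x)"
    using assms by (intro convex_on_continuous) (auto simp: concave_on_def)
  then show ?thesis
    using continuous_on_minus by fastforce
qed

lemma tendsto_zero_if_concave_negdef:
  fixes g :: "'a::euclidean_space \<Rightarrow> real" and p :: "nat \<Rightarrow> 'a"
  assumes conc: "concave_on UNIV g" and g0: "g 0 = 0" and gneg: "\<And>z. z \<noteq> 0 \<Longrightarrow> g z < 0"
    and lim: "(\<lambda>t. g (p t)) \<longlonglongrightarrow> 0"
  shows "p \<longlonglongrightarrow> 0"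
proof (rule tendstoI)
  fix r :: real assume r: "r > 0"
  obtain w :: 'a where "norm w = r"
    using vector_choose_size r by (metis less_imp_le)
  then have "\<exists>q\<in>sphere 0 r. \<forall>y\<in>sphere 0 r. g y \<le> g q"
    using concave_on_continuous[OF conc]
    by (intro continuous_attains_sup) (auto intro: continuous_on_subset)
  then obtain q where q: "norm q = r" and qmax: "\<And>y. norm y = r \<Longrightarrow> g y \<le> g q"
    by auto
  have gq: "g q < 0"
    using q r gneg by auto
  \<comment> \<open>Concavity through 0 bounds g outside the ball by its maximum on the sphere.\<close>
  have outside: "g z \<le> g q" if z: "norm z \<ge> r" for z
  proof -
    define c where "c = r / norm z"
    have zpos: "norm z > 0"
      using z r by linarith
    have c: "c \<ge> 0" "c \<le> 1"
      using zpos z r by (auto simp: c_def divide_simps)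
    have "c * g z \<le> g (c *\<^sub>R z)"
      using concave_onD[OF conc c, of 0 z] g0 by simp
    also have "\<dots> \<le> g q"
      using zpos r by (intro qmax) (simp add: c_def)
    finally have "c * g z \<le> g q" .
    moreover have "g z \<le> c * g z"
      using gneg[of z] g0 c by (cases "z = 0") (auto simp: mult_le_cancel_right1)
    ultimately show ?thesis
      by linarith
  qed
  show "eventually (\<lambda>t. dist (p t) 0 < r) sequentially"
    using order_tendstoD(1)[OF lim gq]
  proof eventually_elim
    case (elim t)
    then have "\<not> r \<le> norm (p t)"
      using outside[of "p t"] by linarith
    then show ?case
      by simp
  qed
qed

lemma tendsto_zero_if_nonpos_sum_tendsto_zero:
  fixes F :: "'i \<Rightarrow> nat \<Rightarrow> real"
  assumes "finite I" and "i \<in> I" and nonpos: "\<And>j t. j \<in> I \<Longrightarrow> F j t \<le> 0"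
    and lim: "(\<lambda>t. \<Sum>j\<in>I. F j t) \<longlonglongrightarrow> 0"
  shows "F i \<longlonglongrightarrow> 0"
proof (rule tendsto_sandwich[OF _ _ lim tendsto_const])
  have "(\<Sum>j\<in>I. F j t) \<le> F i t" for t
    using member_le_sum[of i I "\<lambda>j. - F j t"] assms by (simp add: sum_negf)
  then show "eventually (\<lambda>t. (\<Sum>j\<in>I. F j t) \<le> F i t) sequentially"
    by simp
  show "eventually (\<lambda>t. F i t \<le> 0) sequentially"
    using nonpos \<open>i \<in> I\<close> by simp
qed

lemma agent_optimal_trade_deviation:
  assumes opt: "agent_optimal f h A B a x0 lam u e" and v: "v \<le> a t - h (u t)"
  shows "lam t * v \<le> lam t * e t"
proof -
  let ?obj = "agent_obj f A B x0 lam u"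
  have feas: "agent_feasible h a u (e(t := v))"
    using opt v by (auto simp: agent_optimal_def agent_feasible_def)
  have shift: "?obj (e(t := v)) = (\<lambda>s. ?obj e s + (if s = t then lam t * (v - e t) else 0))"
    by (auto simp: agent_obj_def algebra_simps)
  have "summable (?obj e)"
    using opt by (simp add: agent_optimal_def)
  then have sums: "?obj (e(t := v)) sums (suminf (?obj e) + lam t * (v - e t))"
    unfolding shift by (intro sums_add summable_sums sums_single)
  then have "suminf (?obj (e(t := v))) \<le> suminf (?obj e)"
    using opt feas sums_summable by (auto simp: agent_optimal_def)
  then show ?thesis
    using sums_unique[OF sums] by (simp add: algebra_simps)
qed

lemma agent_optimal_price_nonneg:
  assumes "agent_optimal f h A B a x0 lam u e"
  shows "lam t \<ge> 0"
proof -
  have "e t \<le> a t - h (u t)"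
    using assms by (simp add: agent_optimal_def agent_feasible_def)
  then have "e t - 1 \<le> a t - h (u t)"
    by linarith
  with assms have "lam t * (e t - 1) \<le> lam t * e t"
    by (rule agent_optimal_trade_deviation)
  then show ?thesis
    by (simp add: algebra_simps)
qed

lemma agent_optimal_constraint_binding:
  assumes opt: "agent_optimal f h A B a x0 lam u e" and "lam t > 0"
  shows "e t = a t - h (u t)"
proof -
  have "lam t * (a t - h (u t)) \<le> lam t * e t"
    using opt by (rule agent_optimal_trade_deviation) simp
  then have "a t - h (u t) \<le> e t"
    using \<open>lam t > 0\<close> by simp
  moreover have "e t \<le> a t - h (u t)"
    using opt by (simp add: agent_optimal_def agent_feasible_def)
  ultimately show ?thesis
    by linarith
qed

lemma competitive_equilibrium_resource_binding:
  assumes "competitive_equilibrium f h A B a x0 lam U E" and "lam t > 0"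
  shows "(\<Sum>i\<in>UNIV. h i (U i t)) = (\<Sum>i\<in>UNIV. a i t)"
proof -
  have opt: "\<And>i. agent_optimal (f i) (h i) (A i) (B i) (a i) (x0 i) lam (U i) (E i)"
    using assms(1) by (simp add: competitive_equilibrium_def)
  have "0 = (\<Sum>i\<in>UNIV. E i t)"
    using assms(1) by (simp add: competitive_equilibrium_def)
  also have "\<dots> = (\<Sum>i\<in>UNIV. a i t - h i (U i t))"
    using agent_optimal_constraint_binding[OF opt \<open>lam t > 0\<close>] by simp
  finally show ?thesis
    by (simp add: sum_subtractf)
qed

lemma competitive_equilibrium_utility_summable:
  assumes "competitive_equilibrium f h A B a x0 lam U E"
  shows "summable (\<lambda>t. \<Sum>i\<in>UNIV. f i (traj (A i) (B i) (x0 i) (U i) t) (U i t))"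
proof -
  have opt: "\<And>i. agent_optimal (f i) (h i) (A i) (B i) (a i) (x0 i) lam (U i) (E i)"
    and clear: "\<And>t. (\<Sum>i\<in>UNIV. E i t) = 0"
    using assms by (auto simp: competitive_equilibrium_def)
  have "summable (\<lambda>t. \<Sum>i\<in>UNIV. agent_obj (f i) (A i) (B i) (x0 i) lam (U i) (E i) t)"
    using opt by (intro summable_sum) (auto simp: agent_optimal_def)
  moreover have "(\<Sum>i\<in>UNIV. agent_obj (f i) (A i) (B i) (x0 i) lam (U i) (E i) t)
      = (\<Sum>i\<in>UNIV. f i (traj (A i) (B i) (x0 i) (U i) t) (U i t))" for t
    using clear[of t] by (simp add: agent_obj_def sum.distrib flip: sum_distrib_left)
  ultimately show ?thesis
    by simp
qed

lemma competitive_equilibrium_input_tendsto_zero: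
  fixes f :: "'i::finite \<Rightarrow> real^'d \<Rightarrow> real^'m \<Rightarrow> real"
  assumes f_concave: "\<And>i. concave_on UNIV (\<lambda>p. f i (fst p) (snd p))"
    and f_zero: "\<And>i. f i 0 0 = 0"
    and f_neg: "\<And>i x u. (x, u) \<noteq> (0, 0) \<Longrightarrow> f i x u < 0"
    and equilibrium: "competitive_equilibrium f h A B a x0 lam U E"
  shows "U i \<longlonglongrightarrow> 0"
proof -
  let ?x = "traj (A i) (B i) (x0 i) (U i)"
  have f_nonpos: "f j x u \<le> 0" for j x u
    using f_neg[of x u j] f_zero[of j] by (cases "(x, u) = (0, 0)") auto
  have "(\<lambda>t. \<Sum>j\<in>UNIV. f j (traj (A j) (B j) (x0 j) (U j) t) (U j t)) \<longlonglongrightarrow> 0"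
    by (rule summable_LIMSEQ_zero[OF competitive_equilibrium_utility_summable[OF equilibrium]])
  then have "(\<lambda>t. f i (?x t) (U i t)) \<longlonglongrightarrow> 0"
    by (rule tendsto_zero_if_nonpos_sum_tendsto_zero
        [where F = "\<lambda>j t. f j (traj (A j) (B j) (x0 j) (U j) t) (U j t)", OF finite UNIV_I f_nonpos])
  then have "(\<lambda>t. (?x t, U i t)) \<longlonglongrightarrow> 0"
  proof (intro tendsto_zero_if_concave_negdef[where g = "\<lambda>p. f i (fst p) (snd p)", OF f_concave])
    show "f i (fst 0) (snd 0) = 0"
      using f_zero by simp
    show "f i (fst z) (snd z) < 0" if "z \<noteq> 0" for z :: "(real^'d) \<times> (real^'m)"
      using that f_neg[of "fst z" "snd z" i] by (simp add: zero_prod_def)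
  qed simp
  from tendsto_snd[OF this] show ?thesis
    by simp
qed

theorem theorem8:
  fixes f :: "'i::finite \<Rightarrow> real^'d \<Rightarrow> real^'m \<Rightarrow> real"
    and h :: "'i \<Rightarrow> real^'m \<Rightarrow> real"
    and A :: "'i \<Rightarrow> real^'d^'d" and B :: "'i \<Rightarrow> real^'m^'d"
    and a :: "'i \<Rightarrow> nat \<Rightarrow> real"
    and x0 :: "'i \<Rightarrow> real^'d"
    and lam :: "nat \<Rightarrow> real"
    and U :: "'i \<Rightarrow> nat \<Rightarrow> real^'m" and E :: "'i \<Rightarrow> nat \<Rightarrow> real"
  assumes f_concave: "\<And>i. concave_on UNIV (\<lambda>p. f i (fst p) (snd p))"
    and f_zero: "\<And>i. f i 0 0 = 0"
    and f_neg: "\<And>i x u. (x, u) \<noteq> (0, 0) \<Longrightarrow> f i x u < 0"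
    and h_nonneg: "\<And>i u. h i u \<ge> 0"
    and h_convex: "\<And>i. convex_on UNIV (h i)"
    and h_zero: "\<And>i. h i 0 = 0"
    and C_bound: "\<exists>C>0. \<forall>t. (\<Sum>i\<in>UNIV. a i t) \<ge> C"
    and x0_feasible: "feasible_init f h A B a x0"
    and equilibrium: "competitive_equilibrium f h A B a x0 lam U E"
  shows "\<exists>N. \<forall>t>N. lam t = 0"
proof -
  obtain C where C: "C > 0" "\<And>t. (\<Sum>i\<in>UNIV. a i t) \<ge> C"
    using C_bound by auto
  have "isCont (h i) 0" for i
    using convex_on_continuous[OF open_UNIV h_convex] by (simp add: continuous_on_eq_continuous_at)
  then have "(\<lambda>t. h i (U i t)) \<longlonglongrightarrow> h i 0" for i
    using competitive_equilibrium_input_tendsto_zero[OF f_concave f_zero f_neg equilibrium]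
    by (rule isCont_tendsto_compose)
  then have "(\<lambda>t. \<Sum>i\<in>UNIV. h i (U i t)) \<longlonglongrightarrow> 0"
    using tendsto_sum[of UNIV "\<lambda>i t. h i (U i t)" "\<lambda>_. 0"] h_zero by simp
  then have "eventually (\<lambda>t. (\<Sum>i\<in>UNIV. h i (U i t)) < C) sequentially"
    using \<open>C > 0\<close> by (rule order_tendstoD(2))
  then obtain N where N: "\<And>t. t \<ge> N \<Longrightarrow> (\<Sum>i\<in>UNIV. h i (U i t)) < C"
    by (auto simp: eventually_sequentially)
  have price_nonneg: "lam t \<ge> 0" for t
    using agent_optimal_price_nonneg equilibrium unfolding competitive_equilibrium_def by blast
  have "lam t = 0" if "t > N" for t
  proof (rule ccontr)
    assume "lam t \<noteq> 0"
    with price_nonneg[of t] have "lam t > 0"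
      by simp
    then have "(\<Sum>i\<in>UNIV. h i (U i t)) = (\<Sum>i\<in>UNIV. a i t)"
      by (rule competitive_equilibrium_resource_binding[OF equilibrium])
    with N[of t] C(2)[of t] \<open>t > N\<close> show False
      by simp
  qed
  then show ?thesis
    by blast
qed

end
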